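(* Let $\Gamma$ be a commutative group (written multiplicatively, neutral element $1$) and let $(X,\circ_{\varepsilon})_{\varepsilon\in\Gamma}$ be a $\Gamma$-idempotent right quasigroup. For $x,u,v\in X$ and $\varepsilon\in\Gamma$ define $$\Delta^{x}_{\varepsilon}(u,v)=(x\circ_{\varepsilon}u)\bullet_{\varepsilon}(x\circ_{\varepsilon}v),\qquad \Sigma^{x}_{\varepsilon}(u,v)=x\bullet_{\varepsilon}\big((x\circ_{\varepsilon}u)\circ_{\varepsilon}v\big),\qquad inv^{x}_{\varepsilon}u=(x\circ_{\varepsilon}u)\bullet_{\varepsilon}x .$$ Then for all $x,u,v,w\in X$ and $\varepsilon\in\Gamma$: (a) $\Delta^{x}_{\varepsilon}(u,\Sigma^{x}_{\varepsilon}(u,v))=v$; (b) $\Sigma^{x}_{\varepsilon}(u,\Delta^{x}_{\varepsilon}(u,v))=v$; (c) $\Delta^{x}_{\varepsilon}(u,v)=\Sigma^{x\circ_{\varepsilon}u}_{\varepsilon}(inv^{x}_{\varepsilon}u,v)$; (d) $inv^{x\circ_{\varepsilon}u}_{\varepsilon}\,inv^{x}_{\varepsilon}u=u$; (e) $\Sigma^{x}_{\varepsilon}(u,\Sigma^{x\circ_{\varepsilon}u}_{\varepsilon}(v,w))=\Sigma^{x}_{\varepsilon}(\Sigma^{x}_{\varepsilon}(u,v),w)$; (f) $inv^{x}_{\varepsilon}u=\Delta^{x}_{\varepsilon}(u,x)$; (g) $\Sigma^{x}_{\varepsilon}(x,u)=u$.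
   Context: An idempotent right quasigroup (irq) is a set $X$ with two binary operations $\circ,\bullet$ such that for all $x,y\in X$: $x\circ x=x\bullet x=x$ and $x\circ(x\bullet y)=x\bullet(x\circ y)=y$ (equivalently, for each $a,b$ the equation $a\circ z=b$ has a unique solution $z=a\bullet b$, and $\circ$ is idempotent). Given a commutative group $\Gamma$, a $\Gamma$-idempotent right quasigroup is a set $X$ with a map $\varepsilon\mapsto\circ_{\varepsilon}$ ($\varepsilon\in\Gamma$) such that each $(X,\circ_{\varepsilon})$ is an irq (with inverse operation denoted $\bullet_{\varepsilon}$) and $x\circ_{\varepsilon}(x\circ_{\mu}y)=x\circ_{\varepsilon\mu}y$ for all $\varepsilon,\mu\in\Gamma$, $x,y\in X$. *)

theory Defs
  imports Main
begin

definition irq :: "('a \<Rightarrow> 'a \<Rightarrow> 'a) \<Rightarrow> ('a \<Rightarrow> 'a \<Rightarrow> 'a) \<Rightarrow> bool" where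
  "irq circ bull \<longleftrightarrow>
     (\<forall>x. circ x x = x \<and> bull x x = x) \<and>
     (\<forall>x y. circ x (bull x y) = y \<and> bull x (circ x y) = y)"

text \<open>A Gamma-idempotent right quasigroup, Gamma a commutative group (the type 'g,
  written additively in Isabelle: the group product is +, the neutral element is 0).\<close>
definition gamma_irq :: "('g::ab_group_add \<Rightarrow> 'a \<Rightarrow> 'a \<Rightarrow> 'a) \<Rightarrow> ('g \<Rightarrow> 'a \<Rightarrow> 'a \<Rightarrow> 'a) \<Rightarrow> bool" where
  "gamma_irq circ bull \<longleftrightarrow>
     (\<forall>e. irq (circ e) (bull e)) \<and>
     (\<forall>e m x y. circ e x (circ m x y) = circ (e + m) x y)"

definition Delta :: "('g \<Rightarrow> 'a \<Rightarrow> 'a \<Rightarrow> 'a) \<Rightarrow> ('g \<Rightarrow> 'a \<Rightarrow> 'a \<Rightarrow> 'a) \<Rightarrow> 'g \<Rightarrow> 'a \<Rightarrow> 'a \<Rightarrow> 'a \<Rightarrow> 'a" where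
  "Delta circ bull e x u v = bull e (circ e x u) (circ e x v)"

definition Sigma_op :: "('g \<Rightarrow> 'a \<Rightarrow> 'a \<Rightarrow> 'a) \<Rightarrow> ('g \<Rightarrow> 'a \<Rightarrow> 'a \<Rightarrow> 'a) \<Rightarrow> 'g \<Rightarrow> 'a \<Rightarrow> 'a \<Rightarrow> 'a \<Rightarrow> 'a" where
  "Sigma_op circ bull e x u v = bull e x (circ e (circ e x u) v)"

definition inv_op :: "('g \<Rightarrow> 'a \<Rightarrow> 'a \<Rightarrow> 'a) \<Rightarrow> ('g \<Rightarrow> 'a \<Rightarrow> 'a \<Rightarrow> 'a) \<Rightarrow> 'g \<Rightarrow> 'a \<Rightarrow> 'a \<Rightarrow> 'a" where
  "inv_op circ bull e x u = bull e (circ e x u) x"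

end

theory Submission
  imports Defs
begin

text \<open>Each identity is
  obtained by unfolding the definitions and cancelling adjacent pairs
  a \<circ> (a \<bullet> y) and a \<bullet> (a \<circ> y).\<close>

lemma irq_idem:
  assumes "irq circ bull"
  shows "circ x x = x"
  using assms unfolding irq_def by blast

lemma irq_cancel:
  assumes "irq circ bull"
  shows "circ x (bull x y) = y" and "bull x (circ x y) = y"
  using assms unfolding irq_def by blast+

lemma gamma_irq_level:
  assumes "gamma_irq circ bull"
  shows "irq (circ e) (bull e)"
  using assms unfolding gamma_irq_def by blast

context
  fixes circ bull :: "'g \<Rightarrow> 'a \<Rightarrow> 'a \<Rightarrow> 'a" and e :: 'g
  assumes irq_e: "irq (circ e) (bull e)"
begin

lemma Delta_Sigma_op: "Delta circ bull e x u (Sigma_op circ bull e x u v) = v"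
  unfolding Delta_def Sigma_op_def by (simp add: irq_cancel[OF irq_e])

lemma Sigma_op_Delta: "Sigma_op circ bull e x u (Delta circ bull e x u v) = v"
  unfolding Delta_def Sigma_op_def by (simp add: irq_cancel[OF irq_e])

lemma Delta_eq_Sigma_op_inv_op:
  "Delta circ bull e x u v = Sigma_op circ bull e (circ e x u) (inv_op circ bull e x u) v"
  unfolding Delta_def Sigma_op_def inv_op_def by (simp add: irq_cancel[OF irq_e])

lemma inv_op_inv_op: "inv_op circ bull e (circ e x u) (inv_op circ bull e x u) = u"
  unfolding inv_op_def by (simp add: irq_cancel[OF irq_e])

lemma Sigma_op_assoc:
  "Sigma_op circ bull e x u (Sigma_op circ bull e (circ e x u) v w)
     = Sigma_op circ bull e x (Sigma_op circ bull e x u v) w"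
  unfolding Sigma_op_def by (simp add: irq_cancel[OF irq_e])

lemma inv_op_eq_Delta: "inv_op circ bull e x u = Delta circ bull e x u x"
  unfolding inv_op_def Delta_def by (simp add: irq_idem[OF irq_e])

lemma Sigma_op_base: "Sigma_op circ bull e x x u = u"
  unfolding Sigma_op_def by (simp add: irq_idem[OF irq_e] irq_cancel[OF irq_e])

end

theorem proposition3p5:
  fixes circ bull :: "'g::ab_group_add \<Rightarrow> 'a \<Rightarrow> 'a \<Rightarrow> 'a"
  assumes "gamma_irq circ bull"
  shows "(Delta circ bull e x u (Sigma_op circ bull e x u v) = v) \<and>
    (Sigma_op circ bull e x u (Delta circ bull e x u v) = v) \<and>
    (Delta circ bull e x u v = Sigma_op circ bull e (circ e x u) (inv_op circ bull e x u) v) \<and>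
    (inv_op circ bull e (circ e x u) (inv_op circ bull e x u) = u) \<and>
    (Sigma_op circ bull e x u (Sigma_op circ bull e (circ e x u) v w)
           = Sigma_op circ bull e x (Sigma_op circ bull e x u v) w) \<and>
    (inv_op circ bull e x u = Delta circ bull e x u x) \<and>
    (Sigma_op circ bull e x x u = u)"
proof -
  note irq_e = gamma_irq_level[OF assms, of e]
  note identities = Delta_Sigma_op Sigma_op_Delta Delta_eq_Sigma_op_inv_op inv_op_inv_op
    Sigma_op_assoc inv_op_eq_Delta Sigma_op_base
  show ?thesis
    using identities[where circ = circ and bull = bull and e = e, OF irq_e] by blast
qed

end
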